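(* Let $P,K:\mathbb{N}_0\to\mathbb{N}_0$ be a scaling for which the limit $q^\star=\lim_{n\to\infty}q(\theta_n)$ exists. Then $\lim_{n\to\infty}\mathbb{P}[T_n(\theta_n)>0]=1$ holds if either $0\le q^\star<1$, or $q^\star=1$ and $\lim_{n\to\infty}n^3\tau(\theta_n)=\infty$.
   Context: Random key graph: for positive integers $K\le P$, $\theta=(K,P)$ and $n\ge3$, let $K_1(\theta),\dots,K_n(\theta)$ be i.i.d. random subsets of $\{1,\dots,P\}$, each uniform over the $K$-element subsets; the random key graph $\mathbb{K}(n;\theta)$ on $\{1,\dots,n\}$ has an edge between distinct $i,j$ iff $K_i(\theta)\cap K_j(\theta)\ne\emptyset$. $T_n(\theta)$ denotes the number of triangles in $\mathbb{K}(n;\theta)$. $q(\theta)=\binom{P-K}{K}/\binom{P}{K}$ if $2K\le P$ and $q(\theta)=0$ if $P<2K$. $\tau(\theta)=K^3/P^2+(K^2/P)^3$. A scaling is a pair of functions $P,K:\mathbb{N}_0\to\mathbb{N}_0$ with $1\le K_n\le P_n$ for all $n$, and $\theta_n=(K_n,P_n)$. *)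

theory Defs
  imports "HOL-Probability.Probability"
begin

definition key_rings :: "nat \<Rightarrow> nat \<Rightarrow> nat set set" where
  "key_rings K P = {S. S \<subseteq> {1..P} \<and> card S = K}"

text \<open>Random key graph: node i gets key ring f i, chosen i.i.d. uniformly
  among the K-subsets of {1..P}; the joint law of (K_1,...,K_n).\<close>
definition rkg_pmf :: "nat \<Rightarrow> nat \<Rightarrow> nat \<Rightarrow> (nat \<Rightarrow> nat set) pmf" where
  "rkg_pmf n K P = Pi_pmf {1..n} {} (\<lambda>_. pmf_of_set (key_rings K P))"

definition rkg_edge :: "(nat \<Rightarrow> nat set) \<Rightarrow> nat \<Rightarrow> nat \<Rightarrow> bool" where
  "rkg_edge f i j \<longleftrightarrow> i \<noteq> j \<and> f i \<inter> f j \<noteq> {}"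

definition triangles :: "nat \<Rightarrow> (nat \<Rightarrow> nat set) \<Rightarrow> nat" where
  "triangles n f = card {T. T \<subseteq> {1..n} \<and> card T = 3 \<and>
      (\<forall>i\<in>T. \<forall>j\<in>T. i \<noteq> j \<longrightarrow> rkg_edge f i j)}"

text \<open>P[T_n(theta) > 0] with theta = (K,P).\<close>
definition prob_triangle :: "nat \<Rightarrow> nat \<Rightarrow> nat \<Rightarrow> real" where
  "prob_triangle n K P = measure_pmf.prob (rkg_pmf n K P) {f. triangles n f > 0}"

definition q_rkg :: "nat \<Rightarrow> nat \<Rightarrow> real" where
  "q_rkg K P = (if 2 * K \<le> P then real ((P - K) choose K) / real (P choose K) else 0)"

definition tau_rkg :: "nat \<Rightarrow> nat \<Rightarrow> real" where
  "tau_rkg K P = real K ^ 3 / real P ^ 2 + (real K ^ 2 / real P) ^ 3"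

end

theory Submission
  imports Defs
begin

text \<open>Split the nodes into three blocks of \<open>n div 3\<close> and apply the second moment method to two
  families of triangle witnesses, one node from each block: triangles whose three nodes share a
  common key, and triangles whose three edges are witnessed by three distinct keys taken from
  different thirds of the pool. The first family fails with probability that vanishes when
  \<open>n\<^sup>3 K\<^sup>3 / P\<^sup>2\<close> is large, the second when \<open>n\<^sup>3 (K\<^sup>2 / P)\<^sup>3\<close> is large, so a triangle
  exists with high probability as soon as \<open>n\<^sup>3 \<tau> \<rightarrow> \<infinity>\<close>. If \<open>q\<^sup>\<star> < 1\<close>, the union bound
  \<open>1 - q \<le> K\<^sup>2 / P\<close> keeps \<open>K\<^sup>2 / P\<close> away from \<open>0\<close>, which again forces \<open>n\<^sup>3 \<tau> \<rightarrow> \<infinity>\<close>.\<close>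

section \<open>The second moment method\<close>

lemma prob_none_le_second_moment:
  fixes M :: "'a pmf" and E :: "'b \<Rightarrow> 'a set"
  assumes "finite A"
    and \<mu>_def: "\<mu> = (\<Sum>\<alpha>\<in>A. measure_pmf.prob M (E \<alpha>))" and "\<mu> > 0"
  shows "measure_pmf.prob M {x. \<forall>\<alpha>\<in>A. x \<notin> E \<alpha>} \<le>
           ((\<Sum>\<alpha>\<in>A. \<Sum>\<beta>\<in>A. measure_pmf.prob M (E \<alpha> \<inter> E \<beta>)) - \<mu>\<^sup>2) / \<mu>\<^sup>2"
proof -
  define X where "X x = (\<Sum>\<alpha>\<in>A. indicator (E \<alpha>) x :: real)" for x
  have int_indicator: "integrable M (indicator S :: 'a \<Rightarrow> real)" for S
    by (intro integrable_real_indicator) (auto simp: measure_pmf.emeasure_finite less_top[symmetric])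
  have int_X: "integrable M X"
    unfolding X_def by (intro Bochner_Integration.integrable_sum int_indicator)
  have X_sq: "(X x)\<^sup>2 = (\<Sum>\<alpha>\<in>A. \<Sum>\<beta>\<in>A. indicator (E \<alpha> \<inter> E \<beta>) x)" for x
    unfolding X_def power2_eq_square sum_product by (auto simp: indicator_def intro!: sum.cong)
  have int_X_sq: "integrable M (\<lambda>x. (X x)\<^sup>2)"
    unfolding X_sq by (intro Bochner_Integration.integrable_sum int_indicator)
  have "measure_pmf.expectation M X = \<mu>"
    unfolding X_def \<mu>_def by (simp add: Bochner_Integration.integral_sum int_indicator)
  moreover have "measure_pmf.expectation M (\<lambda>x. (X x)\<^sup>2) =
      (\<Sum>\<alpha>\<in>A. \<Sum>\<beta>\<in>A. measure_pmf.prob M (E \<alpha> \<inter> E \<beta>))"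
    unfolding X_sq by (simp add: Bochner_Integration.integral_sum int_indicator)
  ultimately have var: "measure_pmf.variance M X =
      (\<Sum>\<alpha>\<in>A. \<Sum>\<beta>\<in>A. measure_pmf.prob M (E \<alpha> \<inter> E \<beta>)) - \<mu>\<^sup>2"
    using measure_pmf.variance_eq[OF int_X int_X_sq] by simp
  have "{x. \<forall>\<alpha>\<in>A. x \<notin> E \<alpha>} \<subseteq> {x \<in> space M. \<mu> \<le> \<bar>X x - \<mu>\<bar>}"
    using \<open>\<mu> > 0\<close> by (auto simp: X_def)
  then have "measure_pmf.prob M {x. \<forall>\<alpha>\<in>A. x \<notin> E \<alpha>} \<le>
      measure_pmf.prob M {x \<in> space M. \<mu> \<le> \<bar>X x - measure_pmf.expectation M X\<bar>}"
    using \<open>measure_pmf.expectation M X = \<mu>\<close> by (intro measure_pmf.finite_measure_mono) auto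
  also have "\<dots> \<le> measure_pmf.variance M X / \<mu>\<^sup>2"
    using int_X_sq \<open>\<mu> > 0\<close> by (intro measure_pmf.Chebyshev_inequality) auto
  finally show ?thesis
    unfolding var .
qed

lemma prob_none_le_second_moment_uniform:
  fixes M :: "'a pmf" and E :: "'b \<Rightarrow> 'a set"
  assumes "finite A" "A \<noteq> {}" "\<pi> > 0"
    and single: "\<And>\<alpha>. \<alpha> \<in> A \<Longrightarrow> measure_pmf.prob M (E \<alpha>) = \<pi>"
    and pairs: "\<And>\<alpha>. \<alpha> \<in> A \<Longrightarrow>
      (\<Sum>\<beta>\<in>A. measure_pmf.prob M (E \<alpha> \<inter> E \<beta>)) \<le> real (card A) * \<pi>\<^sup>2 * C"
  shows "measure_pmf.prob M {x. \<forall>\<alpha>\<in>A. x \<notin> E \<alpha>} \<le> C - 1"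
proof -
  define \<mu> where "\<mu> = (\<Sum>\<alpha>\<in>A. measure_pmf.prob M (E \<alpha>))"
  have \<mu>: "\<mu> = real (card A) * \<pi>"
    by (simp add: \<mu>_def single)
  have "card A > 0"
    using assms by (simp add: card_gt_0_iff)
  then have "\<mu> > 0"
    using \<open>\<pi> > 0\<close> by (simp add: \<mu>)
  have "(\<Sum>\<alpha>\<in>A. \<Sum>\<beta>\<in>A. measure_pmf.prob M (E \<alpha> \<inter> E \<beta>)) \<le> \<mu>\<^sup>2 * C"
    using sum_mono[OF pairs, of A] by (simp add: \<mu> power2_eq_square algebra_simps)
  then have "((\<Sum>\<alpha>\<in>A. \<Sum>\<beta>\<in>A. measure_pmf.prob M (E \<alpha> \<inter> E \<beta>)) - \<mu>\<^sup>2) / \<mu>\<^sup>2 \<le> C - 1"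
    using \<open>\<mu> > 0\<close> by (simp add: divide_simps algebra_simps)
  then show ?thesis
    using prob_none_le_second_moment[OF \<open>finite A\<close> \<mu>_def \<open>\<mu> > 0\<close>] by linarith
qed

section \<open>Random key rings\<close>

definition incl_prob :: "nat \<Rightarrow> nat \<Rightarrow> nat \<Rightarrow> real" where
  "incl_prob K P s = (\<Prod>i<s. (real K - real i) / (real P - real i))"

lemma incl_prob_0 [simp]: "incl_prob K P 0 = 1"
  by (simp add: incl_prob_def)

lemma incl_prob_Suc: "incl_prob K P (Suc s) = incl_prob K P s * ((real K - real s) / (real P - real s))"
  by (simp add: incl_prob_def)

lemma incl_prob_1 [simp]: "incl_prob K P (Suc 0) = real K / real P"
  by (simp add: incl_prob_def)

lemma incl_prob_2: "incl_prob K P 2 = real K / real P * ((real K - 1) / (real P - 1))"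
  by (simp add: incl_prob_def numeral_2_eq_2)

lemma incl_prob_3: "incl_prob K P 3 = incl_prob K P 2 * ((real K - 2) / (real P - 2))"
  using incl_prob_Suc[of K P 2] by (simp add: eval_nat_numeral)

lemma incl_prob_4: "incl_prob K P 4 = incl_prob K P 3 * ((real K - 3) / (real P - 3))"
  using incl_prob_Suc[of K P 3] by (simp add: eval_nat_numeral)

lemma incl_prob_eq_0: "K < s \<Longrightarrow> incl_prob K P s = 0"
  unfolding incl_prob_def by (rule prod_zero) auto

lemma incl_prob_nonneg:
  assumes "K \<le> P"
  shows "incl_prob K P s \<ge> 0"
proof (cases "K < s")
  case False
  then show ?thesis
    using assms unfolding incl_prob_def by (intro prod_nonneg) auto
qed (simp add: incl_prob_eq_0)

lemma incl_prob_2_pos: "2 \<le> K \<Longrightarrow> K \<le> P \<Longrightarrow> incl_prob K P 2 > 0"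
  by (simp add: incl_prob_2)

lemma incl_prob_2_le: "1 \<le> K \<Longrightarrow> K \<le> P \<Longrightarrow> incl_prob K P 2 \<le> (real K / real P)\<^sup>2"
  unfolding incl_prob_2 power2_eq_square
  by (cases "P = 1") (auto intro!: mult_left_mono simp: divide_simps algebra_simps)

lemma incl_prob_2_le_sq:
  assumes "2 \<le> K" "K \<le> P" "3 \<le> P"
  defines "r \<equiv> incl_prob K P 2" and "u \<equiv> 2 * real P / real K"
  shows "r \<le> r\<^sup>2 * u\<^sup>2"
proof -
  have "2 * real P \<le> real K * real P"
    using assms by (intro mult_right_mono) auto
  then have "real K * (real P - 1) \<le> 4 * real P * (real K - 1)"
    by (simp add: algebra_simps)
  then have "1 \<le> r * u\<^sup>2"
    using assms by (simp add: incl_prob_2 divide_simps power2_eq_square) (simp add: algebra_simps)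
  then have "r * 1 \<le> r * (r * u\<^sup>2)"
    using incl_prob_2_pos[OF assms(1,2)] by (intro mult_left_mono) (auto simp: r_def)
  then show ?thesis
    by (simp add: power2_eq_square mult.assoc)
qed

lemma incl_prob_3_le:
  assumes "2 \<le> K" "K \<le> P" "3 \<le> P"
  defines "r \<equiv> incl_prob K P 2" and "u \<equiv> 2 * real P / real K"
  shows "incl_prob K P 3 \<le> r\<^sup>2 * u"
proof -
  have "0 \<le> real K * (real P - 3)"
    using assms by simp
  then have "(real K - 2) * (real P - 1) \<le> 2 * (real K - 1) * (real P - 2)"
    by (simp add: algebra_simps)
  then have "(real K - 2) / (real P - 2) \<le> r * u"
    using assms by (simp add: incl_prob_2 divide_simps) (simp add: algebra_simps)
  then have "r * ((real K - 2) / (real P - 2)) \<le> r * (r * u)"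
    using incl_prob_2_pos[OF assms(1,2)] by (intro mult_left_mono) (auto simp: r_def)
  then show ?thesis
    by (simp add: incl_prob_3 r_def power2_eq_square mult.assoc)
qed

lemma incl_prob_4_le:
  assumes "2 \<le> K" "K \<le> P"
  shows "incl_prob K P 4 \<le> (incl_prob K P 2)\<^sup>2"
proof -
  have "(real K - 2) / (real P - 2) * ((real K - 3) / (real P - 3)) \<le> incl_prob K P 2"
  proof (cases "K \<le> 3")
    case True
    then show ?thesis
      using assms incl_prob_2_pos[of K P] by (auto simp: le_Suc_eq numeral_eq_Suc)
  next
    case False
    have "(real K - 2) / (real P - 2) \<le> real K / real P"
      "(real K - 3) / (real P - 3) \<le> (real K - 1) / (real P - 1)"
      using False assms by (simp_all add: divide_simps) (simp_all add: algebra_simps)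
    then show ?thesis
      unfolding incl_prob_2 using False assms by (intro mult_mono) auto
  qed
  then have "incl_prob K P 2 * ((real K - 2) / (real P - 2) * ((real K - 3) / (real P - 3))) \<le>
      incl_prob K P 2 * incl_prob K P 2"
    using incl_prob_2_pos[OF assms] by (intro mult_left_mono) auto
  then show ?thesis
    by (simp add: incl_prob_4 incl_prob_3 power2_eq_square mult.assoc)
qed

lemma binomial_eq_incl_prob_times_binomial:
  assumes "b \<le> K" "K \<le> P"
  shows "real ((P - b) choose (K - b)) = incl_prob K P b * real (P choose K)"
  using assms(1)
proof (induction b)
  case (Suc b)
  have "K - b = Suc (K - Suc b)" "P - b = Suc (P - Suc b)"
    using Suc.prems assms(2) by auto
  then have "real (K - b) * real ((P - b) choose (K - b)) =
      real (P - b) * real ((P - Suc b) choose (K - Suc b))"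
    by (metis Suc_times_binomial of_nat_mult)
  moreover have "real (P - b) > 0"
    using Suc.prems assms(2) by simp
  ultimately have "real ((P - Suc b) choose (K - Suc b)) =
      real (K - b) / real (P - b) * real ((P - b) choose (K - b))"
    by (simp add: field_simps)
  also have "\<dots> = incl_prob K P (Suc b) * real (P choose K)"
    using Suc assms(2) by (simp add: incl_prob_Suc of_nat_diff)
  finally show ?case .
qed simp

lemma finite_key_rings: "finite (key_rings K P)"
  unfolding key_rings_def by (rule finite_subset[of _ "Pow {1..P}"]) auto

lemma card_key_rings: "card (key_rings K P) = P choose K"
  unfolding key_rings_def using n_subsets[of "{1..P}" K] by simp

lemma key_rings_nonempty: "K \<le> P \<Longrightarrow> key_rings K P \<noteq> {}"
  using atLeastAtMost_iff by (auto simp: key_rings_def intro!: exI[of _ "{1..K}"])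

lemma key_rings_meet:
  assumes "S \<in> key_rings K P" "T \<in> key_rings K P" "P < 2 * K"
  shows "S \<inter> T \<noteq> {}"
proof
  assume "S \<inter> T = {}"
  have "finite S" "finite T"
    using assms finite_subset[of _ "{1..P}"] by (auto simp: key_rings_def)
  then have "card (S \<union> T) = 2 * K"
    using assms \<open>S \<inter> T = {}\<close> by (simp add: card_Un_disjoint key_rings_def)
  moreover have "card (S \<union> T) \<le> P"
    using assms card_mono[of "{1..P}" "S \<union> T"] by (auto simp: key_rings_def)
  ultimately show False
    using assms by simp
qed

lemma card_key_rings_superset:
  assumes B: "B \<subseteq> {1..P}" and "card B \<le> K"
  shows "card {S \<in> key_rings K P. B \<subseteq> S} = (P - card B) choose (K - card B)"
proof -
  have "finite B"
    using B finite_subset by blast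
  have "bij_betw (\<lambda>S. S - B) {S \<in> key_rings K P. B \<subseteq> S}
      {T. T \<subseteq> {1..P} - B \<and> card T = K - card B}"
  proof (rule bij_betwI[where g = "\<lambda>T. T \<union> B"])
    show "(\<lambda>S. S - B) \<in> {S \<in> key_rings K P. B \<subseteq> S} \<rightarrow> {T. T \<subseteq> {1..P} - B \<and> card T = K - card B}"
      using \<open>finite B\<close> by (auto simp: key_rings_def card_Diff_subset)
    show "(\<lambda>T. T \<union> B) \<in> {T. T \<subseteq> {1..P} - B \<and> card T = K - card B} \<rightarrow> {S \<in> key_rings K P. B \<subseteq> S}"
    proof
      fix T assume T: "T \<in> {T. T \<subseteq> {1..P} - B \<and> card T = K - card B}"
      then have "finite T" "T \<inter> B = {}"
        using finite_subset[of T "{1..P}"] by auto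
      then have "card (T \<union> B) = K"
        using T \<open>card B \<le> K\<close> \<open>finite B\<close> by (simp add: card_Un_disjoint)
      then show "T \<union> B \<in> {S \<in> key_rings K P. B \<subseteq> S}"
        using T B by (auto simp: key_rings_def)
    qed
  qed auto
  then have "card {S \<in> key_rings K P. B \<subseteq> S} = card ({1..P} - B) choose (K - card B)"
    by (simp add: bij_betw_same_card n_subsets)
  also have "card ({1..P} - B) = P - card B"
    using B \<open>finite B\<close> by (simp add: card_Diff_subset)
  finally show ?thesis .
qed

lemma prob_key_ring_superset:
  assumes B: "B \<subseteq> {1..P}" and "K \<le> P"
  shows "measure_pmf.prob (pmf_of_set (key_rings K P)) {S. B \<subseteq> S} = incl_prob K P (card B)"
proof -
  have prob: "measure_pmf.prob (pmf_of_set (key_rings K P)) {S. B \<subseteq> S} =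
      real (card {S \<in> key_rings K P. B \<subseteq> S}) / real (P choose K)"
    using \<open>K \<le> P\<close> by (simp add: measure_pmf_of_set key_rings_nonempty finite_key_rings
        card_key_rings Int_def conj_commute)
  show ?thesis
  proof (cases "card B \<le> K")
    case True
    then show ?thesis
      using \<open>K \<le> P\<close> by (simp add: prob card_key_rings_superset[OF B]
          binomial_eq_incl_prob_times_binomial)
  next
    case False
    then have "{S \<in> key_rings K P. B \<subseteq> S} = {}"
      by (auto simp: key_rings_def) (meson card_mono finite_atLeastAtMost finite_subset)
    then show ?thesis
      using False by (simp add: prob incl_prob_eq_0 del: Collect_empty_eq)
  qed
qed

lemma q_rkg_eq_prob_disjoint:
  assumes "K \<le> P"
  shows "q_rkg K P = measure_pmf.prob (pmf_of_set (key_rings K P)) {S. S \<inter> {1..K} = {}}"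
proof -
  have "key_rings K P \<inter> {S. S \<inter> {1..K} = {}} = {S. S \<subseteq> {1..P} - {1..K} \<and> card S = K}"
    by (auto simp: key_rings_def)
  moreover have "card ({1..P} - {1..K}) = P - K"
    using assms by (simp add: card_Diff_subset)
  ultimately have "measure_pmf.prob (pmf_of_set (key_rings K P)) {S. S \<inter> {1..K} = {}} =
      real ((P - K) choose K) / real (P choose K)"
    using assms by (simp add: measure_pmf_of_set key_rings_nonempty finite_key_rings card_key_rings n_subsets)
  then show ?thesis
    \<comment> \<open>for \<open>P < 2 * K\<close> the binomial \<open>(P - K) choose K\<close> vanishes, matching \<open>q_rkg K P = 0\<close>\<close>
    by (simp add: q_rkg_def binomial_eq_0)
qed

lemma one_minus_q_rkg_le:
  assumes "K \<le> P"
  shows "1 - q_rkg K P \<le> real K ^ 2 / real P"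
proof -
  let ?M = "pmf_of_set (key_rings K P)"
  have "(\<Union>a\<in>{1..K}. {S. {a} \<subseteq> S}) = - {S. S \<inter> {1..K} = {}}"
    by auto
  then have "1 - q_rkg K P = measure_pmf.prob ?M (\<Union>a\<in>{1..K}. {S. {a} \<subseteq> S})"
    using assms measure_pmf.prob_compl[of "{S. S \<inter> {1..K} = {}}" ?M]
    by (simp add: q_rkg_eq_prob_disjoint Compl_eq_Diff_UNIV)
  also have "\<dots> \<le> (\<Sum>a\<in>{1..K}. measure_pmf.prob ?M {S. {a} \<subseteq> S})"
    by (intro measure_pmf.finite_measure_subadditive_finite) auto
  also have "\<dots> = real K ^ 2 / real P"
  proof -
    have "measure_pmf.prob ?M {S. {a} \<subseteq> S} = real K / real P" if "a \<in> {1..K}" for a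
      using prob_key_ring_superset[of "{a}" P K] that assms by simp
    then show ?thesis
      by (simp add: power2_eq_square)
  qed
  finally show ?thesis .
qed

definition rings_cover :: "nat \<Rightarrow> (nat \<Rightarrow> nat set) \<Rightarrow> (nat \<Rightarrow> nat set) set" where
  "rings_cover n R = {f. \<forall>x\<in>{1..n}. R x \<subseteq> f x}"

lemma rings_cover_Int: "rings_cover n R \<inter> rings_cover n R' = rings_cover n (\<lambda>x. R x \<union> R' x)"
  by (auto simp: rings_cover_def)

lemma prob_rings_cover:
  assumes "\<And>x. R x \<subseteq> {1..P}" and "K \<le> P"
  shows "measure_pmf.prob (rkg_pmf n K P) (rings_cover n R) = (\<Prod>x\<in>{1..n}. incl_prob K P (card (R x)))"
proof -
  have "rings_cover n R = Pi {1..n} (\<lambda>x. {S. R x \<subseteq> S})"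
    by (auto simp: rings_cover_def Pi_def)
  then show ?thesis
    using assms by (simp add: rkg_pmf_def measure_Pi_pmf_Pi prob_key_ring_superset)
qed

lemma rings_in_key_rings:
  assumes "f \<in> set_pmf (rkg_pmf n K P)" "x \<in> {1..n}" "K \<le> P"
  shows "f x \<in> key_rings K P"
  using assms by (auto simp: rkg_pmf_def set_Pi_pmf PiE_dflt_def key_rings_nonempty finite_key_rings)

section \<open>Triangles demanded on three blocks of nodes\<close>

definition node_demand :: "nat \<Rightarrow> nat set \<Rightarrow> nat \<Rightarrow> nat set" where
  "node_demand p S x = (if x = p then S else {})"

text \<open>Nodes \<open>1..3m\<close> form three blocks of \<open>m\<close> nodes, indexed within each block from \<open>0\<close>.\<close>
definition triangle_demand ::
    "nat \<Rightarrow> nat \<Rightarrow> nat \<Rightarrow> nat \<Rightarrow> nat set \<Rightarrow> nat set \<Rightarrow> nat set \<Rightarrow> nat \<Rightarrow> nat set" where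
  "triangle_demand m i j l SA SB SC x =
     node_demand (Suc i) SA x \<union> node_demand (m + Suc j) SB x \<union> node_demand (2 * m + Suc l) SC x"

definition pair_incl_prob :: "nat \<Rightarrow> nat \<Rightarrow> nat \<Rightarrow> nat \<Rightarrow> nat set \<Rightarrow> nat set \<Rightarrow> real" where
  "pair_incl_prob K P i i' S S' =
     (if i = i' then incl_prob K P (card (S \<union> S')) else incl_prob K P (card S) * incl_prob K P (card S'))"

lemma pair_incl_prob_nonneg: "K \<le> P \<Longrightarrow> pair_incl_prob K P i i' S S' \<ge> 0"
  by (simp add: pair_incl_prob_def incl_prob_nonneg)

lemma pair_incl_prob_singletons_le:
  assumes "1 \<le> K" "K \<le> P"
  shows "pair_incl_prob K P i i' {k} {k'} \<le>
           (real K / real P)\<^sup>2 * (if i = i' then if k = k' then real P / real K else 1 else 1)"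
  using assms incl_prob_2_le[OF assms]
  by (auto simp: pair_incl_prob_def power2_eq_square numeral_2_eq_2[symmetric])

lemma pair_incl_prob_doubletons_le:
  assumes "2 \<le> K" "K \<le> P" "3 \<le> P"
    and "x1 \<noteq> x2" "y1 \<noteq> y2" "x1 \<noteq> y2" "x2 \<noteq> y1"
  defines "u \<equiv> 2 * real P / real K"
  shows "pair_incl_prob K P i i' {x1, x2} {y1, y2} \<le>
           (incl_prob K P 2)\<^sup>2 * (if i = i' then (if x1 = y1 then u else 1) * (if x2 = y2 then u else 1) else 1)"
proof (cases "i = i'")
  case True
  note bounds = incl_prob_2_le_sq[OF assms(1-3), folded u_def]
    incl_prob_3_le[OF assms(1-3), folded u_def] incl_prob_4_le[OF assms(1-2)]
  show ?thesis
  proof (cases "x1 = y1"; cases "x2 = y2")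
    assume "x1 = y1" "x2 = y2"
    then have "card ({x1, x2} \<union> {y1, y2}) = 2"
      using assms by auto
    then show ?thesis
      using True bounds \<open>x1 = y1\<close> \<open>x2 = y2\<close>
      by (simp add: pair_incl_prob_def power2_eq_square)
  next
    assume "x1 = y1" "x2 \<noteq> y2"
    then have "card ({x1, x2} \<union> {y1, y2}) = 3"
      using assms by (auto simp: insert_commute)
    then show ?thesis
      using True bounds \<open>x1 = y1\<close> \<open>x2 \<noteq> y2\<close> by (simp add: pair_incl_prob_def)
  next
    assume "x1 \<noteq> y1" "x2 = y2"
    then have "card ({x1, x2} \<union> {y1, y2}) = 3"
      using assms by (auto simp: insert_commute)
    then show ?thesis
      using True bounds \<open>x1 \<noteq> y1\<close> \<open>x2 = y2\<close> by (simp add: pair_incl_prob_def)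
  next
    assume "x1 \<noteq> y1" "x2 \<noteq> y2"
    then have "card ({x1, x2} \<union> {y1, y2}) = 4"
      using assms by auto
    then show ?thesis
      using True bounds \<open>x1 \<noteq> y1\<close> \<open>x2 \<noteq> y2\<close> by (simp add: pair_incl_prob_def)
  qed
next
  case False
  have "card {x1, x2} = 2" "card {y1, y2} = 2"
    using assms by auto
  then show ?thesis
    using False by (simp add: pair_incl_prob_def power2_eq_square)
qed

lemma prod_incl_prob_two_demands:
  assumes "p \<in> {1..n}" "p' \<in> {1..n}"
  shows "(\<Prod>x\<in>{1..n}. incl_prob K P (card (node_demand p S x \<union> node_demand p' S' x))) =
         pair_incl_prob K P p p' S S'"
proof -
  have "(\<Prod>x\<in>{1..n}. incl_prob K P (card (node_demand p S x \<union> node_demand p' S' x))) =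
        (\<Prod>x\<in>{p, p'}. incl_prob K P (card (node_demand p S x \<union> node_demand p' S' x)))"
    by (rule prod.mono_neutral_right) (use assms in \<open>auto simp: node_demand_def\<close>)
  then show ?thesis
    by (cases "p = p'") (auto simp: node_demand_def pair_incl_prob_def)
qed

lemma prob_triangle_demands_Int:
  assumes "3 * m \<le> n" and "i < m" "i' < m" "j < m" "j' < m" "l < m" "l' < m"
    and "SA \<union> SB \<union> SC \<union> SA' \<union> SB' \<union> SC' \<subseteq> {1..P}" and "K \<le> P"
  shows "measure_pmf.prob (rkg_pmf n K P)
           (rings_cover n (triangle_demand m i j l SA SB SC) \<inter>
            rings_cover n (triangle_demand m i' j' l' SA' SB' SC')) =
         pair_incl_prob K P i i' SA SA' * pair_incl_prob K P j j' SB SB' * pair_incl_prob K P l l' SC SC'"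
proof -
  let ?f = "\<lambda>p p' S S' x. incl_prob K P (card (node_demand p S x \<union> node_demand p' S' x))"
  have factor: "incl_prob K P
      (card (triangle_demand m i j l SA SB SC x \<union> triangle_demand m i' j' l' SA' SB' SC' x)) =
      ?f (Suc i) (Suc i') SA SA' x * ?f (m + Suc j) (m + Suc j') SB SB' x *
      ?f (2 * m + Suc l) (2 * m + Suc l') SC SC' x" for x
  proof -
    consider "x \<le> m" | "m < x \<and> x \<le> 2 * m" | "2 * m < x"
      by linarith
    then show ?thesis
      using assms by cases (auto simp: triangle_demand_def node_demand_def Un_ac)
  qed
  have "measure_pmf.prob (rkg_pmf n K P)
           (rings_cover n (triangle_demand m i j l SA SB SC) \<inter>
            rings_cover n (triangle_demand m i' j' l' SA' SB' SC')) =
      (\<Prod>x\<in>{1..n}. ?f (Suc i) (Suc i') SA SA' x * ?f (m + Suc j) (m + Suc j') SB SB' x *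
         ?f (2 * m + Suc l) (2 * m + Suc l') SC SC' x)"
    unfolding rings_cover_Int factor[symmetric]
    using assms by (intro prob_rings_cover) (auto simp: triangle_demand_def node_demand_def)
  also have "\<dots> = pair_incl_prob K P i i' SA SA' * pair_incl_prob K P j j' SB SB' *
      pair_incl_prob K P l l' SC SC'"
  proof -
    have "(\<Prod>x\<in>{1..n}. ?f (Suc i) (Suc i') SA SA' x) = pair_incl_prob K P i i' SA SA'"
      "(\<Prod>x\<in>{1..n}. ?f (m + Suc j) (m + Suc j') SB SB' x) = pair_incl_prob K P j j' SB SB'"
      "(\<Prod>x\<in>{1..n}. ?f (2 * m + Suc l) (2 * m + Suc l') SC SC' x) = pair_incl_prob K P l l' SC SC'"
      by (subst prod_incl_prob_two_demands; use assms in \<open>auto simp: pair_incl_prob_def\<close>)+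
    then show ?thesis
      by (simp add: prod.distrib)
  qed
  finally show ?thesis .
qed

lemma triangles_pos:
  assumes "{a, b, c} \<subseteq> {1..n}" "a \<noteq> b" "b \<noteq> c" "a \<noteq> c"
    and "f a \<inter> f b \<noteq> {}" "f b \<inter> f c \<noteq> {}" "f c \<inter> f a \<noteq> {}"
  shows "triangles n f > 0"
proof -
  let ?T = "{T. T \<subseteq> {1..n} \<and> card T = 3 \<and> (\<forall>i\<in>T. \<forall>j\<in>T. i \<noteq> j \<longrightarrow> rkg_edge f i j)}"
  have "finite ?T"
    by (rule finite_subset[of _ "Pow {1..n}"]) auto
  moreover have "{a, b, c} \<in> ?T"
    using assms by (auto simp: rkg_edge_def Int_commute)
  ultimately show ?thesis
    unfolding triangles_def by (auto simp: card_gt_0_iff)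
qed

lemma triangles_pos_if_rings_cover:
  assumes "3 * m \<le> n" "i < m" "j < m" "l < m"
    and "SA \<inter> SB \<noteq> {}" "SB \<inter> SC \<noteq> {}" "SC \<inter> SA \<noteq> {}"
    and "f \<in> rings_cover n (triangle_demand m i j l SA SB SC)"
  shows "triangles n f > 0"
proof (rule triangles_pos[of "Suc i" "m + Suc j" "2 * m + Suc l"])
  have "SA \<subseteq> f (Suc i)" "SB \<subseteq> f (m + Suc j)" "SC \<subseteq> f (2 * m + Suc l)"
    using assms unfolding rings_cover_def triangle_demand_def node_demand_def
    by (fastforce dest: bspec[of _ _ "Suc i"] bspec[of _ _ "m + Suc j"] bspec[of _ _ "2 * m + Suc l"])+
  then show "f (Suc i) \<inter> f (m + Suc j) \<noteq> {}" "f (m + Suc j) \<inter> f (2 * m + Suc l) \<noteq> {}"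
      "f (2 * m + Suc l) \<inter> f (Suc i) \<noteq> {}"
    using assms(5-7) by blast+
qed (use assms in auto)

lemma prob_no_triangle_eq_0:
  assumes "3 \<le> n" "K \<le> P" "P < 2 * K"
  shows "measure_pmf.prob (rkg_pmf n K P) {f. triangles n f = 0} = 0"
proof -
  have "triangles n f > 0" if "f \<in> set_pmf (rkg_pmf n K P)" for f
  proof (rule triangles_pos[of 1 2 3])
    have "f x \<in> key_rings K P" if "x \<in> {1..3}" for x
      using rings_in_key_rings[of f n K P x] that \<open>f \<in> set_pmf _\<close> assms by auto
    then have "f 1 \<in> key_rings K P" "f 2 \<in> key_rings K P" "f 3 \<in> key_rings K P"
      by auto
    then show "f 1 \<inter> f 2 \<noteq> {}" "f 2 \<inter> f 3 \<noteq> {}" "f 3 \<inter> f 1 \<noteq> {}"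
      using key_rings_meet \<open>P < 2 * K\<close> by blast+
  qed (use assms in auto)
  then show ?thesis
    by (fastforce simp: measure_pmf_zero_iff)
qed

lemma prob_no_triangle_le_second_moment:
  assumes "finite A" "A \<noteq> {}" "\<pi> > 0"
    and "\<And>\<alpha> f. \<alpha> \<in> A \<Longrightarrow> f \<in> E \<alpha> \<Longrightarrow> triangles n f > 0"
    and "\<And>\<alpha>. \<alpha> \<in> A \<Longrightarrow> measure_pmf.prob (rkg_pmf n K P) (E \<alpha>) = \<pi>"
    and "\<And>\<alpha>. \<alpha> \<in> A \<Longrightarrow>
      (\<Sum>\<beta>\<in>A. measure_pmf.prob (rkg_pmf n K P) (E \<alpha> \<inter> E \<beta>)) \<le> real (card A) * \<pi>\<^sup>2 * C"
  shows "measure_pmf.prob (rkg_pmf n K P) {f. triangles n f = 0} \<le> C - 1"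
proof -
  have "measure_pmf.prob (rkg_pmf n K P) {f. triangles n f = 0} \<le>
      measure_pmf.prob (rkg_pmf n K P) {f. \<forall>\<alpha>\<in>A. f \<notin> E \<alpha>}"
    using assms(4) by (intro measure_pmf.finite_measure_mono) force+
  also have "\<dots> \<le> C - 1"
    using assms by (intro prob_none_le_second_moment_uniform) auto
  finally show ?thesis .
qed

lemma sum_if_eq_else:
  fixes c d :: real
  assumes "finite I" "a \<in> I"
  shows "(\<Sum>x\<in>I. if a = x then c else d) = c + (real (card I) - 1) * d"
proof -
  have "(\<Sum>x\<in>I. if a = x then c else d) = (\<Sum>x\<in>I. d + (if a = x then c - d else 0))"
    by (intro sum.cong) auto
  also have "\<dots> = c + (real (card I) - 1) * d"
    using assms by (simp add: sum.distrib algebra_simps)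
  finally show ?thesis .
qed

lemma sum_cube_if_eq:
  fixes c1 c2 c3 :: real
  assumes "i < m" "j < m" "l < m"
  shows "(\<Sum>(i', j', l')\<in>{..<m} \<times> {..<m} \<times> {..<m}.
           (if i = i' then c1 else 1) * (if j = j' then c2 else 1) * (if l = l' then c3 else 1)) =
         (real m - 1 + c1) * (real m - 1 + c2) * (real m - 1 + c3)"
proof -
  let ?f = "\<lambda>i'. if i = i' then c1 else 1" and ?g = "\<lambda>j'. if j = j' then c2 else 1"
    and ?h = "\<lambda>l'. if l = l' then c3 else 1"
  have "(\<Sum>(i', j', l')\<in>{..<m} \<times> {..<m} \<times> {..<m}. ?f i' * ?g j' * ?h l') =
        (\<Sum>i'<m. ?f i' * (\<Sum>j'<m. ?g j' * (\<Sum>l'<m. ?h l')))"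
    by (simp add: sum.cartesian_product' sum_distrib_left mult.assoc)
  also have "\<dots> = sum ?f {..<m} * (sum ?g {..<m} * sum ?h {..<m})"
    by (simp only: sum_distrib_right[symmetric])
  finally show ?thesis
    using assms by (simp add: sum_if_eq_else ac_simps)
qed

section \<open>Triangles on a shared key\<close>

definition shared_key_event :: "nat \<Rightarrow> nat \<Rightarrow> nat \<times> nat \<times> nat \<times> nat \<Rightarrow> (nat \<Rightarrow> nat set) set" where
  "shared_key_event n m = (\<lambda>(k, i, j, l). rings_cover n (triangle_demand m i j l {k} {k} {k}))"

lemma prob_shared_key_event_Int_le:
  assumes "3 * m \<le> n" "1 \<le> K" "K \<le> P"
    and "(k, i, j, l) \<in> {1..P} \<times> {..<m} \<times> {..<m} \<times> {..<m}"
    and "(k', i', j', l') \<in> {1..P} \<times> {..<m} \<times> {..<m} \<times> {..<m}"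
  defines "c \<equiv> if k = k' then real P / real K else 1"
  shows "measure_pmf.prob (rkg_pmf n K P)
           (shared_key_event n m (k, i, j, l) \<inter> shared_key_event n m (k', i', j', l')) \<le>
         (real K / real P) ^ 6 * ((if i = i' then c else 1) * (if j = j' then c else 1) * (if l = l' then c else 1))"
proof -
  have factor: "pair_incl_prob K P x x' {k} {k'} \<le> (real K / real P)\<^sup>2 * (if x = x' then c else 1)" for x x'
    using pair_incl_prob_singletons_le[OF assms(2,3), of x x' k k']
    by (cases "x = x'"; cases "k = k'") (simp_all add: c_def)
  have "measure_pmf.prob (rkg_pmf n K P)
      (shared_key_event n m (k, i, j, l) \<inter> shared_key_event n m (k', i', j', l')) =
      pair_incl_prob K P i i' {k} {k'} * pair_incl_prob K P j j' {k} {k'} * pair_incl_prob K P l l' {k} {k'}"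
    unfolding shared_key_event_def prod.case using assms by (intro prob_triangle_demands_Int) auto
  also have "\<dots> \<le> (real K / real P)\<^sup>2 * (if i = i' then c else 1) *
      ((real K / real P)\<^sup>2 * (if j = j' then c else 1)) * ((real K / real P)\<^sup>2 * (if l = l' then c else 1))"
    using assms by (intro mult_mono factor) (auto simp: pair_incl_prob_nonneg c_def)
  finally show ?thesis
    by (simp add: algebra_simps eval_nat_numeral)
qed

lemma prob_shared_key_event:
  assumes "3 * m \<le> n" "K \<le> P" "\<alpha> \<in> {1..P} \<times> {..<m} \<times> {..<m} \<times> {..<m}"
  shows "measure_pmf.prob (rkg_pmf n K P) (shared_key_event n m \<alpha>) = (real K / real P) ^ 3"
proof -
  obtain k i j l where \<alpha>: "\<alpha> = (k, i, j, l)" "k \<in> {1..P}" "i < m" "j < m" "l < m"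
    using assms(3) by auto
  have "measure_pmf.prob (rkg_pmf n K P) (shared_key_event n m \<alpha> \<inter> shared_key_event n m \<alpha>) =
      pair_incl_prob K P i i {k} {k} * pair_incl_prob K P j j {k} {k} * pair_incl_prob K P l l {k} {k}"
    unfolding \<alpha> shared_key_event_def prod.case using \<alpha> assms by (intro prob_triangle_demands_Int) auto
  then show ?thesis
    by (simp add: pair_incl_prob_def power3_eq_cube)
qed

lemma sum_prob_shared_key_event_Int_le:
  assumes "3 * m \<le> n" "1 \<le> K" "K \<le> P" "\<alpha> \<in> {1..P} \<times> {..<m} \<times> {..<m} \<times> {..<m}"
  shows "(\<Sum>\<beta>\<in>{1..P} \<times> {..<m} \<times> {..<m} \<times> {..<m}.
            measure_pmf.prob (rkg_pmf n K P) (shared_key_event n m \<alpha> \<inter> shared_key_event n m \<beta>)) \<le>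
         (real K / real P) ^ 6 * ((real m + real P / real K) ^ 3 + (real P - 1) * real m ^ 3)"
proof -
  obtain k i j l where \<alpha>: "\<alpha> = (k, i, j, l)" "k \<in> {1..P}" "i < m" "j < m" "l < m"
    using assms(4) by auto
  let ?c = "\<lambda>k'. if k = k' then real P / real K else 1"
  have "(\<Sum>\<beta>\<in>{1..P} \<times> {..<m} \<times> {..<m} \<times> {..<m}.
           measure_pmf.prob (rkg_pmf n K P) (shared_key_event n m \<alpha> \<inter> shared_key_event n m \<beta>)) \<le>
      (\<Sum>(k', i', j', l')\<in>{1..P} \<times> {..<m} \<times> {..<m} \<times> {..<m}. (real K / real P) ^ 6 *
        ((if i = i' then ?c k' else 1) * (if j = j' then ?c k' else 1) * (if l = l' then ?c k' else 1)))"
    using assms \<alpha> by (intro sum_mono) (auto intro: prob_shared_key_event_Int_le)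
  also have "\<dots> = (real K / real P) ^ 6 * (\<Sum>k'\<in>{1..P}. \<Sum>(i', j', l')\<in>{..<m} \<times> {..<m} \<times> {..<m}.
      (if i = i' then ?c k' else 1) * (if j = j' then ?c k' else 1) * (if l = l' then ?c k' else 1))"
    by (simp add: sum.cartesian_product' sum_distrib_left)
  also have "\<dots> = (real K / real P) ^ 6 * (\<Sum>k'\<in>{1..P}. (real m - 1 + ?c k') ^ 3)"
    by (simp add: sum_cube_if_eq[OF \<alpha>(3-5)] power3_eq_cube)
  also have "\<dots> = (real K / real P) ^ 6 * (\<Sum>k'\<in>{1..P}. if k = k' then (real m - 1 + real P / real K) ^ 3
      else real m ^ 3)"
    by (intro arg_cong2[where f = "(*)"] sum.cong) auto
  also have "\<dots> = (real K / real P) ^ 6 * ((real m - 1 + real P / real K) ^ 3 + (real P - 1) * real m ^ 3)"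
    using \<alpha> by (simp add: sum_if_eq_else)
  also have "\<dots> \<le> (real K / real P) ^ 6 * ((real m + real P / real K) ^ 3 + (real P - 1) * real m ^ 3)"
    using \<alpha> by (intro mult_left_mono add_right_mono power_mono) auto
  finally show ?thesis .
qed

lemma triangles_pos_if_shared_key_event:
  assumes "3 * m \<le> n" "\<alpha> \<in> {1..P} \<times> {..<m} \<times> {..<m} \<times> {..<m}" "f \<in> shared_key_event n m \<alpha>"
  shows "triangles n f > 0"
  using assms triangles_pos_if_rings_cover[OF assms(1), of _ _ _ "{_}" "{_}" "{_}" f]
  by (fastforce simp: shared_key_event_def)

lemma shared_key_excess_le:
  fixes z P t :: real
  assumes "0 < z" "1 \<le> P" "0 \<le> t" "P\<^sup>2 / z ^ 3 \<le> t ^ 3"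
  shows "3 / z + 3 * P / z\<^sup>2 + P\<^sup>2 / z ^ 3 \<le> (2 + t) ^ 3 - 8"
proof -
  have "(1 / z) ^ 3 \<le> P\<^sup>2 / z ^ 3"
    using assms by (simp add: power_divide divide_right_mono one_le_power)
  then have "(1 / z) ^ Suc 2 \<le> t ^ Suc 2"
    using assms(4) by (simp add: numeral_3_eq_3)
  then have "1 / z \<le> t"
    using power_le_imp_le_base assms(3) by blast
  have "(P / z\<^sup>2) ^ 3 \<le> (P\<^sup>2 / z ^ 3)\<^sup>2"
    using assms by (simp add: power_divide divide_right_mono power_increasing flip: power_mult)
  also have "\<dots> \<le> (t ^ 3)\<^sup>2"
    using assms by (intro power_mono) auto
  also have "\<dots> = (t\<^sup>2) ^ 3"
    by (simp flip: power_mult)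
  finally have "(P / z\<^sup>2) ^ Suc 2 \<le> (t\<^sup>2) ^ Suc 2"
    by (simp add: numeral_3_eq_3)
  then have "P / z\<^sup>2 \<le> t\<^sup>2"
    using power_le_imp_le_base by (metis zero_le_power2)
  have "3 / z + 3 * P / z\<^sup>2 + P\<^sup>2 / z ^ 3 = 3 * (1 / z) + 3 * (P / z\<^sup>2) + P\<^sup>2 / z ^ 3"
    by simp
  also have "\<dots> \<le> 3 * t + 3 * t\<^sup>2 + t ^ 3"
    using \<open>1 / z \<le> t\<close> \<open>P / z\<^sup>2 \<le> t\<^sup>2\<close> assms(4) by (intro add_mono mult_left_mono) auto
  also have "\<dots> \<le> (2 + t) ^ 3 - 8"
    using assms(3) by (simp add: algebra_simps power2_eq_square power3_eq_cube)
  finally show ?thesis .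
qed

lemma prob_no_triangle_le_shared_key:
  assumes "3 \<le> n" "1 \<le> K" "K \<le> P"
  defines "z \<equiv> real K * real (n div 3)"
  assumes "0 \<le> t" "real P ^ 2 / z ^ 3 \<le> t ^ 3"
  shows "measure_pmf.prob (rkg_pmf n K P) {f. triangles n f = 0} \<le> (2 + t) ^ 3 - 8"
proof -
  define m where "m = n div 3"
  define A where "A = {1..P} \<times> {..<m} \<times> {..<m} \<times> {..<m}"
  define C where "C = ((real m + real P / real K) ^ 3 + (real P - 1) * real m ^ 3) / (real P * real m ^ 3)"
  have "1 \<le> m" "3 * m \<le> n"
    using assms by (auto simp: m_def)
  have "measure_pmf.prob (rkg_pmf n K P) {f. triangles n f = 0} \<le> C - 1"
  proof (rule prob_no_triangle_le_second_moment)
    show "triangles n f > 0" if "\<alpha> \<in> A" "f \<in> shared_key_event n m \<alpha>" for \<alpha> f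
      using triangles_pos_if_shared_key_event[OF \<open>3 * m \<le> n\<close>] that by (simp add: A_def)
    show "(\<Sum>\<beta>\<in>A. measure_pmf.prob (rkg_pmf n K P) (shared_key_event n m \<alpha> \<inter> shared_key_event n m \<beta>))
        \<le> real (card A) * ((real K / real P) ^ 3)\<^sup>2 * C" if "\<alpha> \<in> A" for \<alpha>
    proof -
      have "real (card A) = real P * real m ^ 3"
        by (simp add: A_def card_cartesian_product power3_eq_cube)
      then show ?thesis
        using sum_prob_shared_key_event_Int_le[OF \<open>3 * m \<le> n\<close> assms(2,3), of \<alpha>] that \<open>1 \<le> m\<close> assms
        unfolding A_def[symmetric] by (simp add: C_def power_mult[symmetric])
    qed
  qed (use \<open>1 \<le> m\<close> \<open>3 * m \<le> n\<close> assms in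
      \<open>auto simp: A_def prob_shared_key_event lessThan_empty_iff\<close>)
  also have "C - 1 = 3 / z + 3 * real P / z\<^sup>2 + real P ^ 2 / z ^ 3"
    using \<open>1 \<le> m\<close> assms(1-3)
    by (simp add: C_def z_def m_def[symmetric] field_simps power2_eq_square power3_eq_cube)
  also have "\<dots> \<le> (2 + t) ^ 3 - 8"
    using \<open>1 \<le> m\<close> assms by (intro shared_key_excess_le) (auto simp: m_def)
  finally show ?thesis .
qed

section \<open>Triangles on three distinct keys\<close>

definition pool_key :: "nat \<Rightarrow> nat \<Rightarrow> nat \<Rightarrow> nat" where
  "pool_key Q g a = g * Q + Suc a"

lemma pool_key_eq_iff:
  assumes "a < Q" "a' < Q"
  shows "pool_key Q g a = pool_key Q g' a' \<longleftrightarrow> g = g' \<and> a = a'"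
proof
  assume "pool_key Q g a = pool_key Q g' a'"
  then have "(a + g * Q) div Q = (a' + g' * Q) div Q" "(a + g * Q) mod Q = (a' + g' * Q) mod Q"
    by (simp_all add: pool_key_def add.commute)
  then show "g = g' \<and> a = a'"
    using assms by simp
qed simp

text \<open>The pool is split into three thirds of \<open>Q\<close> keys; the three edges of the demanded
  triangle are witnessed by distinct keys, one from each third.\<close>
definition distinct_keys_event ::
    "nat \<Rightarrow> nat \<Rightarrow> nat \<Rightarrow> nat \<times> nat \<times> nat \<times> nat \<times> nat \<times> nat \<Rightarrow> (nat \<Rightarrow> nat set) set" where
  "distinct_keys_event n m Q = (\<lambda>(a, b, c, i, j, l). rings_cover n (triangle_demand m i j l
      {pool_key Q 1 b, pool_key Q 2 c} {pool_key Q 2 c, pool_key Q 0 a} {pool_key Q 0 a, pool_key Q 1 b}))"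

lemma prob_distinct_keys_event_Int_le:
  assumes "3 * m \<le> n" "2 \<le> K" "K \<le> P" "3 \<le> P" "3 * Q \<le> P"
    and "(a, b, c, i, j, l) \<in> {..<Q} \<times> {..<Q} \<times> {..<Q} \<times> {..<m} \<times> {..<m} \<times> {..<m}"
    and "(a', b', c', i', j', l') \<in> {..<Q} \<times> {..<Q} \<times> {..<Q} \<times> {..<m} \<times> {..<m} \<times> {..<m}"
  defines "h \<equiv> \<lambda>x x'. if x = x' then 2 * real P / real K else 1"
  shows "measure_pmf.prob (rkg_pmf n K P)
           (distinct_keys_event n m Q (a, b, c, i, j, l) \<inter> distinct_keys_event n m Q (a', b', c', i', j', l')) \<le>
         incl_prob K P 2 ^ 6 * ((if i = i' then h b b' * h c c' else 1) *
           (if j = j' then h c c' * h a a' else 1) * (if l = l' then h a a' * h b b' else 1))"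
proof -
  have factor: "pair_incl_prob K P x x' {pool_key Q g s, pool_key Q g' t} {pool_key Q g s', pool_key Q g' t'}
      \<le> (incl_prob K P 2)\<^sup>2 * (if x = x' then h s s' * h t t' else 1)"
    if "g \<noteq> g'" "s < Q" "t < Q" "s' < Q" "t' < Q" for g g' s t s' t' x x'
  proof -
    have "pool_key Q g s \<noteq> pool_key Q g' t" "pool_key Q g s' \<noteq> pool_key Q g' t'"
      "pool_key Q g s \<noteq> pool_key Q g' t'" "pool_key Q g' t \<noteq> pool_key Q g s'"
      using that by (simp_all add: pool_key_eq_iff)
    from pair_incl_prob_doubletons_le[OF assms(2-4) this, of x x']
    show ?thesis
      using that unfolding h_def by (simp only: pool_key_eq_iff simp_thms)
  qed
  have "measure_pmf.prob (rkg_pmf n K P)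
      (distinct_keys_event n m Q (a, b, c, i, j, l) \<inter> distinct_keys_event n m Q (a', b', c', i', j', l')) =
      pair_incl_prob K P i i' {pool_key Q 1 b, pool_key Q 2 c} {pool_key Q 1 b', pool_key Q 2 c'} *
      pair_incl_prob K P j j' {pool_key Q 2 c, pool_key Q 0 a} {pool_key Q 2 c', pool_key Q 0 a'} *
      pair_incl_prob K P l l' {pool_key Q 0 a, pool_key Q 1 b} {pool_key Q 0 a', pool_key Q 1 b'}"
    unfolding distinct_keys_event_def prod.case
    using assms by (intro prob_triangle_demands_Int) (auto simp: pool_key_def)
  also have "\<dots> \<le> (incl_prob K P 2)\<^sup>2 * (if i = i' then h b b' * h c c' else 1) *
      ((incl_prob K P 2)\<^sup>2 * (if j = j' then h c c' * h a a' else 1)) *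
      ((incl_prob K P 2)\<^sup>2 * (if l = l' then h a a' * h b b' else 1))"
    using assms by (intro mult_mono factor) (auto simp: pair_incl_prob_nonneg h_def)
  finally show ?thesis
    by (simp add: algebra_simps eval_nat_numeral)
qed

lemma prob_distinct_keys_event:
  assumes "3 * m \<le> n" "K \<le> P" "3 * Q \<le> P"
    and "\<alpha> \<in> {..<Q} \<times> {..<Q} \<times> {..<Q} \<times> {..<m} \<times> {..<m} \<times> {..<m}"
  shows "measure_pmf.prob (rkg_pmf n K P) (distinct_keys_event n m Q \<alpha>) = incl_prob K P 2 ^ 3"
proof -
  obtain a b c i j l where \<alpha>: "\<alpha> = (a, b, c, i, j, l)" "a < Q" "b < Q" "c < Q" "i < m" "j < m" "l < m"
    using assms(4) by auto
  let ?S1 = "{pool_key Q 1 b, pool_key Q 2 c}" and ?S2 = "{pool_key Q 2 c, pool_key Q 0 a}"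
    and ?S3 = "{pool_key Q 0 a, pool_key Q 1 b}"
  have "card ?S1 = 2" "card ?S2 = 2" "card ?S3 = 2"
    using \<alpha> by (simp_all add: pool_key_eq_iff)
  moreover have "measure_pmf.prob (rkg_pmf n K P)
      (distinct_keys_event n m Q \<alpha> \<inter> distinct_keys_event n m Q \<alpha>) =
      pair_incl_prob K P i i ?S1 ?S1 * pair_incl_prob K P j j ?S2 ?S2 * pair_incl_prob K P l l ?S3 ?S3"
    unfolding \<alpha> distinct_keys_event_def prod.case
    using \<alpha> assms by (intro prob_triangle_demands_Int) (auto simp: pool_key_def)
  ultimately show ?thesis
    by (simp add: pair_incl_prob_def power3_eq_cube)
qed

lemma binomial_excess_le:
  fixes v1 v2 v3 :: real
  assumes "1 \<le> Q" "1 \<le> v1" "1 \<le> v2" "1 \<le> v3"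
  defines "p \<equiv> 1 / Q"
  shows "(Q - 1) ^ 3 + 3 * (Q - 1)\<^sup>2 * v1 + 3 * (Q - 1) * v2 + v3 \<le>
           Q ^ 3 * (1 + 3 * p * (v1 - 1) + 3 * p\<^sup>2 * (v2 - 1) + p ^ 3 * (v3 - 1))"
proof -
  have "(Q - 1) ^ 3 + 3 * (Q - 1)\<^sup>2 * v1 + 3 * (Q - 1) * v2 + v3 =
      Q ^ 3 + 3 * (Q - 1)\<^sup>2 * (v1 - 1) + 3 * (Q - 1) * (v2 - 1) + (v3 - 1)"
    by (simp add: algebra_simps power2_eq_square power3_eq_cube)
  also have "\<dots> \<le> Q ^ 3 + 3 * Q\<^sup>2 * (v1 - 1) + 3 * Q * (v2 - 1) + (v3 - 1)"
    using assms by (intro add_mono mult_right_mono mult_left_mono power_mono) auto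
  also have "\<dots> = Q ^ 3 * (1 + 3 * p * (v1 - 1) + 3 * p\<^sup>2 * (v2 - 1) + p ^ 3 * (v3 - 1))"
    using assms by (simp add: p_def field_simps power2_eq_square power3_eq_cube)
  finally show ?thesis .
qed

text \<open>Only the agreement pattern of the key indices \<open>a, b, c\<close> with \<open>a', b', c'\<close> matters, and
  each index agrees for exactly one of the \<open>Q\<close> choices.\<close>
lemma sum_triangle_overlaps_eq:
  fixes m u :: real
  assumes "a < Q" "b < Q" "c < Q" "1 \<le> m"
  defines "h \<equiv> \<lambda>x x'. if x = x' then u else 1"
    and "d1 \<equiv> (u - 1) / m" and "d2 \<equiv> (u\<^sup>2 - 1) / m"
  shows "(\<Sum>a'<Q. \<Sum>b'<Q. \<Sum>c'<Q.
            (m - 1 + h b b' * h c c') * (m - 1 + h c c' * h a a') * (m - 1 + h a a' * h b b')) =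
         m ^ 3 * ((real Q - 1) ^ 3 + 3 * (real Q - 1)\<^sup>2 * (1 + d1)\<^sup>2 +
           3 * (real Q - 1) * ((1 + d1)\<^sup>2 * (1 + d2)) + (1 + d2) ^ 3)"
proof -
  define \<psi> where "\<psi> x y z = (m - 1 + y * z) * (m - 1 + z * x) * (m - 1 + x * y)" for x y z
  have "1 + d1 = (m - 1 + u) / m" "1 + d2 = (m - 1 + u\<^sup>2) / m"
    using assms by (simp_all add: d1_def d2_def field_simps)
  then have \<psi>_values: "\<psi> 1 1 1 = m ^ 3"
      "\<psi> u 1 1 = m ^ 3 * (1 + d1)\<^sup>2" "\<psi> 1 u 1 = m ^ 3 * (1 + d1)\<^sup>2" "\<psi> 1 1 u = m ^ 3 * (1 + d1)\<^sup>2"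
      "\<psi> u u 1 = m ^ 3 * ((1 + d1)\<^sup>2 * (1 + d2))" "\<psi> u 1 u = m ^ 3 * ((1 + d1)\<^sup>2 * (1 + d2))"
      "\<psi> 1 u u = m ^ 3 * ((1 + d1)\<^sup>2 * (1 + d2))" "\<psi> u u u = m ^ 3 * (1 + d2) ^ 3"
    using assms by (simp_all add: \<psi>_def field_simps power2_eq_square power3_eq_cube)
  have sum_h: "(\<Sum>x'<Q. F (h x x')) = F u + (real Q - 1) * F 1" if "x < Q" for x and F :: "real \<Rightarrow> real"
    using sum_if_eq_else[of "{..<Q}" x "F u" "F 1"] that by (simp add: h_def if_distrib)
  have "(\<Sum>a'<Q. \<Sum>b'<Q. \<Sum>c'<Q. \<psi> (h a a') (h b b') (h c c')) =
      (\<Sum>a'<Q. \<Sum>b'<Q. \<psi> (h a a') (h b b') u + (real Q - 1) * \<psi> (h a a') (h b b') 1)"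
    using assms(3) by (intro sum.cong refl sum_h)
  also have "\<dots> = (\<Sum>a'<Q. (\<psi> (h a a') u u + (real Q - 1) * \<psi> (h a a') u 1) +
      (real Q - 1) * (\<psi> (h a a') 1 u + (real Q - 1) * \<psi> (h a a') 1 1))"
    using assms(2) sum_h[where F = "\<lambda>y. \<psi> _ y u + (real Q - 1) * \<psi> _ y 1"]
    by (intro sum.cong refl) blast
  also have "\<dots> = m ^ 3 * ((real Q - 1) ^ 3 + 3 * (real Q - 1)\<^sup>2 * (1 + d1)\<^sup>2 +
        3 * (real Q - 1) * ((1 + d1)\<^sup>2 * (1 + d2)) + (1 + d2) ^ 3)"
    using assms(1) sum_h[where F = "\<lambda>x. (\<psi> x u u + (real Q - 1) * \<psi> x u 1) +
      (real Q - 1) * (\<psi> x 1 u + (real Q - 1) * \<psi> x 1 1)"]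
    by (simp add: \<psi>_values algebra_simps power2_eq_square power3_eq_cube)
  finally show ?thesis
    by (simp add: \<psi>_def mult_ac)
qed

lemma sum_triangle_overlaps_le:
  fixes m u :: real
  assumes "a < Q" "b < Q" "c < Q" "1 \<le> m" "1 \<le> u"
  defines "h \<equiv> \<lambda>x x'. if x = x' then u else 1"
    and "d1 \<equiv> (u - 1) / m" and "d2 \<equiv> (u\<^sup>2 - 1) / m" and "p \<equiv> 1 / real Q"
  shows "(\<Sum>a'<Q. \<Sum>b'<Q. \<Sum>c'<Q.
            (m - 1 + h b b' * h c c') * (m - 1 + h c c' * h a a') * (m - 1 + h a a' * h b b')) \<le>
         real Q ^ 3 * m ^ 3 * (1 + 3 * p * ((1 + d1)\<^sup>2 - 1) + 3 * p\<^sup>2 * ((1 + d1)\<^sup>2 * (1 + d2) - 1) +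
           p ^ 3 * ((1 + d2) ^ 3 - 1))"
proof -
  have "0 \<le> d1" "0 \<le> d2"
    using assms by (simp_all add: d1_def d2_def one_le_power)
  then have "1 \<le> (1 + d1)\<^sup>2" "1 \<le> (1 + d2) ^ 3" "1 \<le> (1 + d1)\<^sup>2 * (1 + d2)"
    by (simp_all add: one_le_power mult_ge1_I)
  then have "m ^ 3 * ((real Q - 1) ^ 3 + 3 * (real Q - 1)\<^sup>2 * (1 + d1)\<^sup>2 +
        3 * (real Q - 1) * ((1 + d1)\<^sup>2 * (1 + d2)) + (1 + d2) ^ 3) \<le>
      m ^ 3 * (real Q ^ 3 * (1 + 3 * p * ((1 + d1)\<^sup>2 - 1) +
        3 * p\<^sup>2 * ((1 + d1)\<^sup>2 * (1 + d2) - 1) + p ^ 3 * ((1 + d2) ^ 3 - 1)))"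
    using assms by (intro mult_left_mono binomial_excess_le[of "real Q", folded p_def]) auto
  then show ?thesis
    unfolding h_def d1_def d2_def sum_triangle_overlaps_eq[OF assms(1-4)] by (simp add: mult_ac)
qed

lemma sum_prob_distinct_keys_event_Int_le:
  assumes "3 * m \<le> n" "2 \<le> K" "K \<le> P" "3 \<le> P" "3 * Q \<le> P"
    and "\<alpha> \<in> {..<Q} \<times> {..<Q} \<times> {..<Q} \<times> {..<m} \<times> {..<m} \<times> {..<m}"
  defines "u \<equiv> 2 * real P / real K"
  defines "d1 \<equiv> (u - 1) / real m" and "d2 \<equiv> (u\<^sup>2 - 1) / real m" and "p \<equiv> 1 / real Q"
  shows "(\<Sum>\<beta>\<in>{..<Q} \<times> {..<Q} \<times> {..<Q} \<times> {..<m} \<times> {..<m} \<times> {..<m}.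
            measure_pmf.prob (rkg_pmf n K P) (distinct_keys_event n m Q \<alpha> \<inter> distinct_keys_event n m Q \<beta>))
         \<le> incl_prob K P 2 ^ 6 * (real Q ^ 3 * real m ^ 3 * (1 + 3 * p * ((1 + d1)\<^sup>2 - 1) +
             3 * p\<^sup>2 * ((1 + d1)\<^sup>2 * (1 + d2) - 1) + p ^ 3 * ((1 + d2) ^ 3 - 1)))"
proof -
  obtain a b c i j l where \<alpha>: "\<alpha> = (a, b, c, i, j, l)" "a < Q" "b < Q" "c < Q" "i < m" "j < m" "l < m"
    using assms(6) by auto
  define h where "h x x' = (if x = x' then u else 1)" for x x' :: nat
  have "1 \<le> u"
    using assms by (simp add: u_def field_simps)
  have "(\<Sum>\<beta>\<in>{..<Q} \<times> {..<Q} \<times> {..<Q} \<times> {..<m} \<times> {..<m} \<times> {..<m}.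
           measure_pmf.prob (rkg_pmf n K P) (distinct_keys_event n m Q \<alpha> \<inter> distinct_keys_event n m Q \<beta>))
      \<le> (\<Sum>(a', b', c', i', j', l')\<in>{..<Q} \<times> {..<Q} \<times> {..<Q} \<times> {..<m} \<times> {..<m} \<times> {..<m}.
           incl_prob K P 2 ^ 6 * ((if i = i' then h b b' * h c c' else 1) *
             (if j = j' then h c c' * h a a' else 1) * (if l = l' then h a a' * h b b' else 1)))"
  proof (rule sum_mono)
    fix \<beta> assume \<beta>: "\<beta> \<in> {..<Q} \<times> {..<Q} \<times> {..<Q} \<times> {..<m} \<times> {..<m} \<times> {..<m}"
    then obtain a' b' c' i' j' l' where \<beta>_eq: "\<beta> = (a', b', c', i', j', l')"
      by auto
    show "measure_pmf.prob (rkg_pmf n K P) (distinct_keys_event n m Q \<alpha> \<inter> distinct_keys_event n m Q \<beta>)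
        \<le> (case \<beta> of (a', b', c', i', j', l') \<Rightarrow> incl_prob K P 2 ^ 6 *
          ((if i = i' then h b b' * h c c' else 1) * (if j = j' then h c c' * h a a' else 1) *
           (if l = l' then h a a' * h b b' else 1)))"
      unfolding \<alpha>(1) \<beta>_eq prod.case h_def u_def
      by (rule prob_distinct_keys_event_Int_le[OF assms(1-5)]) (use \<alpha> \<beta> \<beta>_eq in auto)
  qed
  also have "\<dots> = incl_prob K P 2 ^ 6 * (\<Sum>a'<Q. \<Sum>b'<Q. \<Sum>c'<Q.
      \<Sum>(i', j', l')\<in>{..<m} \<times> {..<m} \<times> {..<m}. (if i = i' then h b b' * h c c' else 1) *
        (if j = j' then h c c' * h a a' else 1) * (if l = l' then h a a' * h b b' else 1))"
    by (simp add: sum.cartesian_product' sum_distrib_left)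
  also have "\<dots> = incl_prob K P 2 ^ 6 * (\<Sum>a'<Q. \<Sum>b'<Q. \<Sum>c'<Q. (real m - 1 + h b b' * h c c') *
      (real m - 1 + h c c' * h a a') * (real m - 1 + h a a' * h b b'))"
    by (simp add: sum_cube_if_eq[OF \<alpha>(5-7)])
  also have "\<dots> \<le> incl_prob K P 2 ^ 6 * (real Q ^ 3 * real m ^ 3 * (1 + 3 * p * ((1 + d1)\<^sup>2 - 1) +
      3 * p\<^sup>2 * ((1 + d1)\<^sup>2 * (1 + d2) - 1) + p ^ 3 * ((1 + d2) ^ 3 - 1)))"
    using \<alpha> \<open>1 \<le> u\<close> assms(2,3) incl_prob_nonneg[OF assms(3)] unfolding h_def d1_def d2_def p_def
    by (intro mult_left_mono sum_triangle_overlaps_le) auto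
  finally show ?thesis .
qed

lemma cubic_excess_le:
  fixes p d1 d2 Y :: real
  assumes "0 \<le> p" "p \<le> 1" "0 \<le> d1" "0 \<le> d2"
    and "p * (2 * d1 + d1\<^sup>2) \<le> Y" "p * d2 \<le> Y"
  shows "3 * p * ((1 + d1)\<^sup>2 - 1) + 3 * p\<^sup>2 * ((1 + d1)\<^sup>2 * (1 + d2) - 1) + p ^ 3 * ((1 + d2) ^ 3 - 1)
           \<le> (2 + Y) ^ 3 - 8"
proof -
  define a where "a = p * (2 * d1 + d1\<^sup>2)"
  define b where "b = p * d2"
  have a: "0 \<le> a" "a \<le> Y" and b: "0 \<le> b" "b \<le> Y"
    using assms by (simp_all add: a_def b_def)
  have "3 * p * ((1 + d1)\<^sup>2 - 1) = 3 * a"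
    by (simp add: a_def power2_eq_square algebra_simps)
  moreover have "3 * p\<^sup>2 * ((1 + d1)\<^sup>2 * (1 + d2) - 1) = 3 * (a * (p + b) + p * b)"
    by (simp add: a_def b_def algebra_simps power2_eq_square)
  moreover have "p ^ 3 * ((1 + d2) ^ 3 - 1) = b * (3 * p\<^sup>2 + 3 * p * b + b\<^sup>2)"
    by (simp add: b_def algebra_simps power2_eq_square power3_eq_cube)
  moreover have "p * b \<le> Y"
    using mult_right_mono[of p 1 b] assms b by simp
  then have "a * (p + b) + p * b \<le> Y * (1 + Y) + Y"
    using assms a b by (intro add_mono mult_mono) auto
  moreover have "b * (3 * p\<^sup>2 + 3 * p * b + b\<^sup>2) \<le> Y * (3 + 3 * Y + Y\<^sup>2)"
    using assms a b by (intro mult_mono add_mono power_mono) (auto simp: power_le_one mult_le_one)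
  ultimately show ?thesis
    using a by (simp add: algebra_simps power2_eq_square power3_eq_cube)
qed

lemma distinct_keys_excess_le:
  fixes p m u :: real
  assumes "0 \<le> p" "p \<le> 1" "1 \<le> m" "1 \<le> u"
  defines "d1 \<equiv> (u - 1) / m" and "d2 \<equiv> (u\<^sup>2 - 1) / m"
  shows "3 * p * ((1 + d1)\<^sup>2 - 1) + 3 * p\<^sup>2 * ((1 + d1)\<^sup>2 * (1 + d2) - 1) + p ^ 3 * ((1 + d2) ^ 3 - 1)
           \<le> (2 + p * ((2 * u + u\<^sup>2) / m)) ^ 3 - 8"
proof (rule cubic_excess_le)
  have "0 \<le> d1" "d1 \<le> u / m"
    using assms by (simp_all add: d1_def divide_simps)
  then have "d1\<^sup>2 \<le> (u / m)\<^sup>2"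
    by (intro power_mono)
  also have "\<dots> \<le> u\<^sup>2 / m"
    using assms by (simp add: power_divide divide_simps power2_eq_square)
  finally have "2 * d1 + d1\<^sup>2 \<le> (2 * u + u\<^sup>2) / m"
    using \<open>d1 \<le> u / m\<close> by (simp add: add_divide_distrib)
  then show "p * (2 * d1 + d1\<^sup>2) \<le> p * ((2 * u + u\<^sup>2) / m)"
    using assms(1) by (rule mult_left_mono)
  have "d2 \<le> (2 * u + u\<^sup>2) / m"
    using assms by (simp add: d2_def divide_simps)
  then show "p * d2 \<le> p * ((2 * u + u\<^sup>2) / m)"
    using assms(1) by (rule mult_left_mono)
  show "0 \<le> d1" "0 \<le> d2"
    using assms by (simp_all add: d1_def d2_def one_le_power)
qed (use assms in auto)

lemma triangles_pos_if_distinct_keys_event: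
  assumes "3 * m \<le> n" "\<alpha> \<in> {..<Q} \<times> {..<Q} \<times> {..<Q} \<times> {..<m} \<times> {..<m} \<times> {..<m}"
    and "f \<in> distinct_keys_event n m Q \<alpha>"
  shows "triangles n f > 0"
proof -
  obtain a b c i j l where "\<alpha> = (a, b, c, i, j, l)" "i < m" "j < m" "l < m"
    using assms(2) by auto
  with assms show ?thesis
    by (intro triangles_pos_if_rings_cover[OF assms(1), of i j l
        "{pool_key Q 1 b, pool_key Q 2 c}" "{pool_key Q 2 c, pool_key Q 0 a}" "{pool_key Q 0 a, pool_key Q 1 b}"])
      (auto simp: distinct_keys_event_def)
qed

lemma prob_no_triangle_le_distinct_keys:
  assumes "3 \<le> n" "2 \<le> K" "K \<le> P" "3 \<le> P"
  defines "u \<equiv> 2 * real P / real K"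
  defines "Y \<equiv> (2 * u + u\<^sup>2) / (real (P div 3) * real (n div 3))"
  shows "measure_pmf.prob (rkg_pmf n K P) {f. triangles n f = 0} \<le> (2 + Y) ^ 3 - 8"
proof -
  define m where "m = n div 3"
  define Q where "Q = P div 3"
  define A where "A = {..<Q} \<times> {..<Q} \<times> {..<Q} \<times> {..<m} \<times> {..<m} \<times> {..<m}"
  define d1 where "d1 = (u - 1) / real m"
  define d2 where "d2 = (u\<^sup>2 - 1) / real m"
  define p where "p = 1 / real Q"
  define C where "C = 1 + 3 * p * ((1 + d1)\<^sup>2 - 1) + 3 * p\<^sup>2 * ((1 + d1)\<^sup>2 * (1 + d2) - 1) +
    p ^ 3 * ((1 + d2) ^ 3 - 1)"
  have "1 \<le> m" "3 * m \<le> n" "1 \<le> Q" "3 * Q \<le> P" "1 \<le> u"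
    using assms by (auto simp: m_def Q_def u_def field_simps)
  have "measure_pmf.prob (rkg_pmf n K P) {f. triangles n f = 0} \<le> C - 1"
  proof (rule prob_no_triangle_le_second_moment)
    show "triangles n f > 0" if "\<alpha> \<in> A" "f \<in> distinct_keys_event n m Q \<alpha>" for \<alpha> f
      using triangles_pos_if_distinct_keys_event[OF \<open>3 * m \<le> n\<close>] that by (simp add: A_def)
    show "(\<Sum>\<beta>\<in>A. measure_pmf.prob (rkg_pmf n K P)
        (distinct_keys_event n m Q \<alpha> \<inter> distinct_keys_event n m Q \<beta>))
        \<le> real (card A) * (incl_prob K P 2 ^ 3)\<^sup>2 * C" if "\<alpha> \<in> A" for \<alpha>
    proof -
      have "real (card A) = real Q ^ 3 * real m ^ 3"
        by (simp add: A_def card_cartesian_product power3_eq_cube)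
      then show ?thesis
        using sum_prob_distinct_keys_event_Int_le[OF \<open>3 * m \<le> n\<close> assms(2-4) \<open>3 * Q \<le> P\<close>, of \<alpha>] that
        unfolding A_def[symmetric] C_def d1_def d2_def p_def u_def by (simp add: power_mult[symmetric] mult_ac)
    qed
  qed (use \<open>1 \<le> m\<close> \<open>1 \<le> Q\<close> \<open>3 * m \<le> n\<close> \<open>3 * Q \<le> P\<close> assms incl_prob_2_pos[of K P] in
      \<open>auto simp: A_def prob_distinct_keys_event lessThan_empty_iff\<close>)
  also have "C - 1 \<le> (2 + Y) ^ 3 - 8"
  proof -
    have "Y = p * ((2 * u + u\<^sup>2) / real m)"
      by (simp add: Y_def p_def m_def Q_def)
    then show ?thesis
      using distinct_keys_excess_le[of p "real m" u] \<open>1 \<le> Q\<close> \<open>1 \<le> m\<close> \<open>1 \<le> u\<close>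
      unfolding C_def d1_def d2_def by (simp add: p_def)
  qed
  finally show ?thesis .
qed

lemma distinct_keys_parameter_le:
  assumes "3 \<le> n" "2 \<le> K" "3 \<le> P" "real P / (real K ^ 2 * real (n div 3)) \<le> t"
  defines "u \<equiv> 2 * real P / real K"
  shows "(2 * u + u\<^sup>2) / (real (P div 3) * real (n div 3)) \<le> 162 / real n + 36 * t"
proof -
  define m where "m = n div 3"
  define Q where "Q = P div 3"
  have "real n \<le> 9 * real m" "1 \<le> m" "real P \<le> 9 * real Q" "1 \<le> Q"
    using assms by (auto simp: m_def Q_def)
  have "2 * u / (real Q * real m) \<le> 162 / real n"
  proof -
    have "real P * real n \<le> (9 * real Q) * (9 * real m)"
      using \<open>real n \<le> 9 * real m\<close> \<open>real P \<le> 9 * real Q\<close> by (intro mult_mono) auto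
    then have "real P * real n * 2 \<le> (9 * real Q) * (9 * real m) * real K"
      by (rule mult_mono) (use assms in auto)
    then show ?thesis
      using assms \<open>1 \<le> m\<close> \<open>1 \<le> Q\<close> by (simp add: u_def divide_simps) (simp add: algebra_simps)
  qed
  moreover have "u\<^sup>2 / (real Q * real m) \<le> 36 * (real P / (real K ^ 2 * real m))"
    using assms \<open>real P \<le> 9 * real Q\<close> \<open>1 \<le> m\<close> \<open>1 \<le> Q\<close>
    by (simp add: u_def divide_simps power2_eq_square)
  ultimately show ?thesis
    using assms(4) by (simp add: add_divide_distrib m_def Q_def)
qed

section \<open>The limit\<close>

text \<open>Here \<open>1458 = 2 \<cdot> 9\<^sup>3\<close>, as \<open>n \<le> 9 (n div 3)\<close> for \<open>n \<ge> 3\<close>.\<close>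
lemma min_ratio_le_n_cube_tau:
  assumes "3 \<le> n" "1 \<le> K" "K \<le> P"
  defines "m \<equiv> real (n div 3)"
  shows "min (real P ^ 2 / (real K * m) ^ 3) ((real P / (real K ^ 2 * m)) ^ 3) \<le>
           1458 / (real n ^ 3 * tau_rkg K P)"
proof -
  define s1 where "s1 = (real K * m) ^ 3 / real P ^ 2"
  define s2 where "s2 = (real K ^ 2 * m) ^ 3 / real P ^ 3"
  have "0 < s1" "0 < s2"
    using assms by (simp_all add: m_def s1_def s2_def)
  have "0 < tau_rkg K P"
    using assms unfolding tau_rkg_def by (intro add_pos_pos divide_pos_pos zero_less_power) auto
  have "real n ^ 3 \<le> (9 * m) ^ 3"
    using assms by (intro power_mono) auto
  then have "real n ^ 3 * tau_rkg K P \<le> (9 * m) ^ 3 * tau_rkg K P"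
    using \<open>0 < tau_rkg K P\<close> by (intro mult_right_mono) auto
  also have "\<dots> = 729 * (s1 + s2)"
    by (simp add: s1_def s2_def tau_rkg_def power_mult_distrib power_divide algebra_simps flip: power_mult)
  also have "\<dots> \<le> 1458 * max s1 s2"
    by simp
  finally have "1 / max s1 s2 \<le> 1458 / (real n ^ 3 * tau_rkg K P)"
    using assms \<open>0 < s1\<close> \<open>0 < s2\<close> \<open>0 < tau_rkg K P\<close> by (simp add: divide_simps max_def)
  moreover have "1 / max s1 s2 = min (1 / s1) (1 / s2)"
  proof (cases "s1 \<le> s2")
    case True
    then have "1 / s2 \<le> 1 / s1"
      using \<open>0 < s1\<close> by (intro divide_left_mono) auto
    then show ?thesis
      using True by (simp add: max.absorb2 min.absorb2)
  next
    case False
    then have "1 / s1 \<le> 1 / s2"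
      using \<open>0 < s2\<close> by (intro divide_left_mono) auto
    then show ?thesis
      using False by (simp add: max.absorb1 min.absorb1)
  qed
  ultimately show ?thesis
    by (simp add: s1_def s2_def power_divide)
qed

lemma prob_no_triangle_le:
  assumes "3 \<le> n" "1 \<le> K" "K \<le> P"
  defines "t \<equiv> root 3 (1458 / (real n ^ 3 * tau_rkg K P))"
  shows "measure_pmf.prob (rkg_pmf n K P) {f. triangles n f = 0} \<le> (2 + (162 / real n + 36 * t)) ^ 3 - 8"
proof -
  define m where "m = real (n div 3)"
  define B where "B = 162 / real n + 36 * t"
  have "1 \<le> m"
    using assms by (simp add: m_def)
  have "0 < tau_rkg K P"
    using assms unfolding tau_rkg_def by (intro add_pos_pos divide_pos_pos zero_less_power) auto
  then have "0 \<le> t" and t_cube: "min (real P ^ 2 / (real K * m) ^ 3) ((real P / (real K ^ 2 * m)) ^ 3) \<le> t ^ 3"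
    using min_ratio_le_n_cube_tau[OF assms(1-3)] by (simp_all add: t_def m_def)
  have mono: "(2 + x) ^ 3 - 8 \<le> (2 + B) ^ 3 - 8" if "0 \<le> x" "x \<le> B" for x
    using that by (simp add: power_mono)
  consider (shared) "real P ^ 2 / (real K * m) ^ 3 \<le> t ^ 3" | (dense) "P < 2 * K"
    | (distinct) "(real P / (real K ^ 2 * m)) ^ 3 \<le> t ^ 3" "\<not> real P ^ 2 / (real K * m) ^ 3 \<le> t ^ 3"
      "2 * K \<le> P"
    using t_cube by (cases "P < 2 * K") (auto simp: min_le_iff_disj)
  then show ?thesis
  proof cases
    case shared
    then have "measure_pmf.prob (rkg_pmf n K P) {f. triangles n f = 0} \<le> (2 + t) ^ 3 - 8"
      using prob_no_triangle_le_shared_key[OF assms(1-3) \<open>0 \<le> t\<close>] by (simp add: m_def)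
    also have "\<dots> \<le> (2 + B) ^ 3 - 8"
      using \<open>0 \<le> t\<close> by (intro mono) (auto simp: B_def)
    finally show ?thesis
      by (simp add: B_def)
  next
    case dense
    then show ?thesis
      using prob_no_triangle_eq_0[OF assms(1,3)] mono[of 0] \<open>0 \<le> t\<close> by (simp add: B_def)
  next
    case distinct
    have "K \<noteq> 1"
    proof
      assume "K = 1"
      then have "real P ^ 2 / (real K * m) ^ 3 \<le> (real P / (real K ^ 2 * m)) ^ 3"
        using assms \<open>1 \<le> m\<close> by (simp add: power_divide divide_right_mono power_increasing)
      with distinct show False
        by linarith
    qed
    then have "2 \<le> K" "3 \<le> P"
      using assms distinct(3) by linarith+
    have "real P / (real K ^ 2 * m) \<le> t"
      using power_le_imp_le_base[of _ 2 t] distinct(1) \<open>0 \<le> t\<close> by (simp add: numeral_3_eq_3)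
    then have "(2 * (2 * real P / real K) + (2 * real P / real K)\<^sup>2) / (real (P div 3) * m) \<le> B"
      unfolding B_def m_def by (rule distinct_keys_parameter_le[OF assms(1) \<open>2 \<le> K\<close> \<open>3 \<le> P\<close>])
    then have "(2 + (2 * (2 * real P / real K) + (2 * real P / real K)\<^sup>2) / (real (P div 3) * m)) ^ 3 - 8
        \<le> (2 + B) ^ 3 - 8"
      using \<open>1 \<le> m\<close> by (intro mono) simp_all
    then show ?thesis
      using prob_no_triangle_le_distinct_keys[OF assms(1) \<open>2 \<le> K\<close> assms(3) \<open>3 \<le> P\<close>]
      unfolding B_def m_def by linarith
  qed
qed

lemma prob_triangle_eq: "prob_triangle n K P = 1 - measure_pmf.prob (rkg_pmf n K P) {f. triangles n f = 0}"
  using measure_pmf.prob_compl[of "{f. triangles n f = 0}" "rkg_pmf n K P"]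
  by (simp add: prob_triangle_def Compl_eq_Diff_UNIV[symmetric] Collect_neg_eq[symmetric])

lemma filterlim_n_cube_tau_at_top:
  assumes "\<And>n. K n \<le> P n" "(\<lambda>n. q_rkg (K n) (P n)) \<longlonglongrightarrow> qstar" "qstar < 1"
  shows "filterlim (\<lambda>n. real n ^ 3 * tau_rkg (K n) (P n)) at_top sequentially"
proof -
  define \<delta> where "\<delta> = (1 - qstar) / 2"
  have "\<delta> > 0" "qstar < 1 - \<delta>"
    using assms(3) by (simp_all add: \<delta>_def field_simps)
  have "\<forall>\<^sub>F n in sequentially. \<delta> ^ 3 * real n ^ 3 \<le> real n ^ 3 * tau_rkg (K n) (P n)"
    using order_tendstoD(2)[OF assms(2) \<open>qstar < 1 - \<delta>\<close>]
  proof eventually_elim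
    case (elim n)
    then have "\<delta> \<le> real (K n) ^ 2 / real (P n)"
      using one_minus_q_rkg_le[OF assms(1), of n] by linarith
    then have "\<delta> ^ 3 \<le> (real (K n) ^ 2 / real (P n)) ^ 3"
      using \<open>\<delta> > 0\<close> by (intro power_mono) auto
    also have "\<dots> \<le> tau_rkg (K n) (P n)"
      by (simp add: tau_rkg_def)
    finally have "\<delta> ^ 3 * real n ^ 3 \<le> tau_rkg (K n) (P n) * real n ^ 3"
      by (rule mult_right_mono) simp
    then show ?case
      by (simp add: mult.commute)
  qed
  moreover have "filterlim (\<lambda>n. \<delta> ^ 3 * real n ^ 3) at_top sequentially"
    using \<open>\<delta> > 0\<close> by (intro filterlim_tendsto_pos_mult_at_top[OF tendsto_const]
        filterlim_pow_at_top filterlim_real_sequentially) auto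
  ultimately show ?thesis
    by (rule filterlim_at_top_mono[rotated])
qed

lemma prob_no_triangle_tendsto_0:
  assumes "\<And>n. 1 \<le> K n \<and> K n \<le> P n"
    and "filterlim (\<lambda>n. real n ^ 3 * tau_rkg (K n) (P n)) at_top sequentially"
  shows "(\<lambda>n. measure_pmf.prob (rkg_pmf n (K n) (P n)) {f. triangles n f = 0}) \<longlonglongrightarrow> 0"
proof (rule tendsto_sandwich[OF _ _ tendsto_const])
  let ?t = "\<lambda>n. root 3 (1458 / (real n ^ 3 * tau_rkg (K n) (P n)))"
  show "\<forall>\<^sub>F n in sequentially. measure_pmf.prob (rkg_pmf n (K n) (P n)) {f. triangles n f = 0}
      \<le> (2 + (162 / real n + 36 * ?t n)) ^ 3 - 8"
    using eventually_ge_at_top[of 3] by eventually_elim (use assms(1) in \<open>auto intro: prob_no_triangle_le\<close>)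
  have "(\<lambda>n. 1458 / (real n ^ 3 * tau_rkg (K n) (P n))) \<longlonglongrightarrow> 0"
    using tendsto_divide_0[OF tendsto_const filterlim_at_top_imp_at_infinity[OF assms(2)]] .
  from tendsto_real_root[OF this, of 3] have "?t \<longlonglongrightarrow> 0"
    by simp
  then have "(\<lambda>n. 162 / real n + 36 * ?t n) \<longlonglongrightarrow> 0 + 36 * 0"
    by (intro tendsto_add tendsto_mult tendsto_const lim_const_over_n)
  from tendsto_diff[OF tendsto_power[OF tendsto_add[OF tendsto_const this]] tendsto_const]
  have "(\<lambda>n. (2 + (162 / real n + 36 * ?t n)) ^ 3 - 8) \<longlonglongrightarrow> (2 + (0 + 36 * 0)) ^ 3 - 8" .
  then show "(\<lambda>n. (2 + (162 / real n + 36 * ?t n)) ^ 3 - 8) \<longlonglongrightarrow> 0"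
    by simp
qed (simp add: measure_nonneg)

theorem theorem2:
  fixes P K :: "nat \<Rightarrow> nat" and qstar :: real
  assumes scaling: "\<And>n. 1 \<le> K n \<and> K n \<le> P n"
    and qlim: "(\<lambda>n. q_rkg (K n) (P n)) \<longlonglongrightarrow> qstar"
    and cond: "(0 \<le> qstar \<and> qstar < 1) \<or>
               (qstar = 1 \<and> filterlim (\<lambda>n. real n ^ 3 * tau_rkg (K n) (P n)) at_top sequentially)"
  shows "(\<lambda>n. prob_triangle n (K n) (P n)) \<longlonglongrightarrow> 1"
proof -
  have "filterlim (\<lambda>n. real n ^ 3 * tau_rkg (K n) (P n)) at_top sequentially"
    using cond filterlim_n_cube_tau_at_top[OF _ qlim] scaling by blast
  then have "(\<lambda>n. measure_pmf.prob (rkg_pmf n (K n) (P n)) {f. triangles n f = 0}) \<longlonglongrightarrow> 0"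
    by (rule prob_no_triangle_tendsto_0[OF scaling])
  from tendsto_diff[OF tendsto_const this, of 1] show ?thesis
    by (simp add: prob_triangle_eq)
qed

end
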